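(* A coarse space $(X,\mathcal E)$ has $\operatorname{asdim}(X)\le n$ for some $n\in\omega$ if and only if for every entourage $\varepsilon\in\mathcal E$ there is an entourage $\delta\in\mathcal E$ such that for every finite set $F\subset X$ there is a coloring $\chi:F\to\{0,\dots,n\}$ such that every $\chi$-monochrome $\varepsilon$-chain $C\subset F$ satisfies $C\times C\subset\delta$.
   Context: A coarse space is a pair $(X,\mathcal E)$ of a set and a family of entourages $\varepsilon\subset X\times X$ that contain the diagonal, are symmetric, are (up to containment) closed under composition, and such that any symmetric $\delta$ with $\Delta_X\subset\delta\subset\varepsilon\in\mathcal E$ is in $\mathcal E$. $B(x,\varepsilon)=\{y:(x,y)\in\varepsilon\}$; $\operatorname{mesh}(\mathcal U)=\bigcup_{U\in\mathcal U}U\times U$. $\operatorname{asdim}(X)$ is the least $n\in\omega$ such that for every $\varepsilon\in\mathcal E$ there is a cover $\mathcal U$ of $X$ with $\operatorname{mesh}(\mathcal U)\subset\delta$ for some $\delta\in\mathcal E$ and each $B(x,\varepsilon)$ meeting at most $n+1$ members of $\mathcal U$ ($\infty$ if none). An $\varepsilon$-chain is a finite set $\{x_0,\dots,x_m\}$ with $(x_i,x_{i+1})\in\varepsilon$ for all $i<m$; it is $\chi$-monochrome if $\chi$ is constant on it. *)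

theory Defs
  imports Main "HOL-Library.Extended_Nat"
begin

definition coarse_space :: "'a set \<Rightarrow> ('a \<times> 'a) set set \<Rightarrow> bool" where
  "coarse_space X E \<longleftrightarrow>
     (\<forall>\<epsilon>\<in>E. Id_on X \<subseteq> \<epsilon> \<and> \<epsilon> \<subseteq> X \<times> X \<and> sym \<epsilon>) \<and>
     (\<forall>\<epsilon>\<in>E. \<forall>\<delta>\<in>E. \<exists>\<eta>\<in>E. \<epsilon> O \<delta> \<subseteq> \<eta>) \<and>
     (\<forall>\<epsilon>\<in>E. \<forall>\<delta>. sym \<delta> \<and> Id_on X \<subseteq> \<delta> \<and> \<delta> \<subseteq> \<epsilon> \<longrightarrow> \<delta> \<in> E)"

definition ball :: "'a \<Rightarrow> ('a \<times> 'a) set \<Rightarrow> 'a set" where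
  "ball x \<epsilon> = {y. (x, y) \<in> \<epsilon>}"

definition mesh :: "'a set set \<Rightarrow> ('a \<times> 'a) set" where
  "mesh \<U> = (\<Union>U\<in>\<U>. U \<times> U)"

definition asdim_prop :: "'a set \<Rightarrow> ('a \<times> 'a) set set \<Rightarrow> nat \<Rightarrow> bool" where
  "asdim_prop X E n \<longleftrightarrow>
     (\<forall>\<epsilon>\<in>E. \<exists>\<U>. \<Union>\<U> = X \<and> (\<exists>\<delta>\<in>E. mesh \<U> \<subseteq> \<delta>) \<and>
        (\<forall>x\<in>X. finite {U\<in>\<U>. ball x \<epsilon> \<inter> U \<noteq> {}} \<and>
                card {U\<in>\<U>. ball x \<epsilon> \<inter> U \<noteq> {}} \<le> n + 1))"

definition asdim :: "'a set \<Rightarrow> ('a \<times> 'a) set set \<Rightarrow> enat" where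
  "asdim X E = (if \<exists>n. asdim_prop X E n then enat (LEAST n. asdim_prop X E n) else \<infinity>)"

definition eps_chain :: "('a \<times> 'a) set \<Rightarrow> 'a set \<Rightarrow> bool" where
  "eps_chain \<epsilon> C \<longleftrightarrow>
     (\<exists>m::nat. \<exists>x::nat \<Rightarrow> 'a. C = x ` {0..m} \<and> (\<forall>i<m. (x i, x (Suc i)) \<in> \<epsilon>))"

definition monochrome :: "('a \<Rightarrow> nat) \<Rightarrow> 'a set \<Rightarrow> bool" where
  "monochrome \<chi> C \<longleftrightarrow> (\<forall>x\<in>C. \<forall>y\<in>C. \<chi> x = \<chi> y)"

end

theory Submission
  imports Defs
begin

text \<open>
  Let \<open>\<epsilon>\<^sub>0 = \<epsilon>\<close> and \<open>\<epsilon>\<^sub>i \<circ> \<epsilon> \<subseteq> \<epsilon>\<^bsub>i+1\<^esub>\<close>, and take a uniformly bounded cover whose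
  \<open>\<epsilon>\<^bsub>n+1\<^esub>\<close>-balls meet at most \<open>n + 1\<close> members. For each \<open>x\<close> the families of members meeting
  its \<open>\<epsilon>\<^sub>0\<close>-, \<dots>, \<open>\<epsilon>\<^bsub>n+1\<^esub>\<close>-balls increase, are nonempty and have at most \<open>n + 1\<close> members,
  so two consecutive ones agree at some level \<open>i \<le> n\<close>; colour \<open>x\<close> by the size of the first
  such stable family, minus one. If \<open>y\<close> is \<open>\<epsilon>\<close>-close to \<open>x\<close>, the stable family of \<open>x\<close> is
  contained in the family of \<open>y\<close> one level up; hence equally coloured \<open>\<epsilon>\<close>-neighbours have the
  same stable family, and a monochrome \<open>\<epsilon>\<close>-chain stays \<open>\<epsilon>\<^bsub>n+1\<^esub>\<close>-close to one member of the
  cover.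

  Conversely, the colourings of the finite subsets glue, by a Zorn argument on partial
  colourings, to a colouring of \<open>X\<close>. The components of the graph of monochrome
  \<open>\<epsilon> \<circ> \<epsilon>\<close>-edges then form a uniformly bounded cover, and an \<open>\<epsilon>\<close>-ball meets at most one
  component of each colour.
\<close>

definition members_meeting :: "'a set set \<Rightarrow> 'a \<Rightarrow> ('a \<times> 'a) set \<Rightarrow> 'a set set" where
  "members_meeting \<U> x \<epsilon> = {U\<in>\<U>. ball x \<epsilon> \<inter> U \<noteq> {}}"

definition chain_bounded_colouring ::
    "nat \<Rightarrow> ('a \<times> 'a) set \<Rightarrow> ('a \<times> 'a) set \<Rightarrow> 'a set \<Rightarrow> ('a \<Rightarrow> nat) \<Rightarrow> bool" where
  "chain_bounded_colouring n \<epsilon> \<delta> F \<chi> \<longleftrightarrow>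
     (\<forall>x\<in>F. \<chi> x \<le> n) \<and> (\<forall>C. C \<subseteq> F \<and> eps_chain \<epsilon> C \<and> monochrome \<chi> C \<longrightarrow> C \<times> C \<subseteq> \<delta>)"

definition monochrome_edges :: "('a \<times> 'a) set \<Rightarrow> ('a \<Rightarrow> nat) \<Rightarrow> ('a \<times> 'a) set" where
  "monochrome_edges \<epsilon> \<chi> = {(a, b) \<in> \<epsilon>. \<chi> a = \<chi> b}"

definition extends_on :: "'a set \<Rightarrow> ('a \<Rightarrow> nat) \<Rightarrow> ('a \<times> nat) set \<Rightarrow> bool" where
  "extends_on F \<chi> p \<longleftrightarrow> (\<forall>x\<in>F. \<forall>c. (x, c) \<in> p \<longrightarrow> \<chi> x = c)"

definition consistent_partial_colouring ::
    "'a set \<Rightarrow> nat \<Rightarrow> ('a set \<Rightarrow> ('a \<Rightarrow> nat) \<Rightarrow> bool) \<Rightarrow> ('a \<times> nat) set \<Rightarrow> bool" where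
  "consistent_partial_colouring X n P p \<longleftrightarrow> p \<subseteq> X \<times> {..n} \<and>
     (\<forall>F. F \<subseteq> X \<and> finite F \<longrightarrow> (\<exists>\<chi>. P F \<chi> \<and> extends_on F \<chi> p))"

lemma asdim_prop_mono:
  assumes "asdim_prop X E k" "k \<le> n"
  shows "asdim_prop X E n"
  using assms unfolding asdim_prop_def by (meson add_le_mono1 order_trans)

lemma asdim_le_enat_iff: "asdim X E \<le> enat n \<longleftrightarrow> asdim_prop X E n"
proof
  assume le: "asdim X E \<le> enat n"
  then have ex: "\<exists>k. asdim_prop X E k"
    by (metis asdim_def infinity_ileE)
  then have "(LEAST k. asdim_prop X E k) \<le> n"
    using le by (simp add: asdim_def)
  then show "asdim_prop X E n"
    using ex by (metis LeastI asdim_prop_mono)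
next
  assume "asdim_prop X E n"
  then show "asdim X E \<le> enat n"
    by (auto simp: asdim_def intro: Least_le)
qed

lemma finite_eps_chain: "eps_chain \<epsilon> C \<Longrightarrow> finite C"
  unfolding eps_chain_def by (elim exE conjE) simp

lemma coarse_space_entourageD:
  assumes "coarse_space X E" "\<epsilon> \<in> E"
  shows "Id_on X \<subseteq> \<epsilon>" "\<epsilon> \<subseteq> X \<times> X" "sym \<epsilon>"
  using conjunct1[OF assms(1)[unfolded coarse_space_def]] assms(2) by blast+

lemma coarse_space_relcomp:
  assumes "coarse_space X E" "\<epsilon> \<in> E" "\<delta> \<in> E"
  obtains \<eta> where "\<eta> \<in> E" "\<epsilon> O \<delta> \<subseteq> \<eta>"
  using conjunct1[OF conjunct2[OF assms(1)[unfolded coarse_space_def]]] assms(2,3) by blast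

lemma coarse_space_iterated_entourages:
  assumes X: "coarse_space X E" and "\<epsilon> \<in> E"
  shows "\<exists>e. (\<forall>i. e i \<in> E) \<and> mono e \<and> (\<forall>i. e i O \<epsilon> \<subseteq> e (Suc i))"
proof -
  have "\<forall>r\<in>E. \<exists>\<eta>. \<eta> \<in> E \<and> r O \<epsilon> \<subseteq> \<eta>"
    using coarse_space_relcomp[OF X _ \<open>\<epsilon> \<in> E\<close>] by metis
  then obtain f where f: "\<forall>r\<in>E. f r \<in> E \<and> r O \<epsilon> \<subseteq> f r"
    by (rule bchoice[elim_format]) blast
  define e where "e i = (f ^^ i) \<epsilon>" for i
  have E: "e i \<in> E" for i
    by (induction i) (simp_all add: e_def \<open>\<epsilon> \<in> E\<close> f)
  have step: "e i O \<epsilon> \<subseteq> e (Suc i)" for i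
    using f E[of i] by (simp add: e_def)
  have "e i \<subseteq> e i O \<epsilon>" for i
    using coarse_space_entourageD(1,2)[OF X E[of i]] coarse_space_entourageD(1)[OF X \<open>\<epsilon> \<in> E\<close>]
    by blast
  with step have "mono e"
    unfolding mono_iff_le_Suc by blast
  with E step show ?thesis by blast
qed

lemma mono_finite_sets_stabilise:
  fixes A :: "nat \<Rightarrow> 'b set"
  assumes mono: "mono A" and fin: "finite (A (Suc n))"
    and "A 0 \<noteq> {}" and "card (A (Suc n)) \<le> n + 1"
  shows "\<exists>i\<le>n. A i = A (Suc i)"
proof (rule ccontr)
  assume "\<not> ?thesis"
  then have grow: "A i \<subset> A (Suc i)" if "i \<le> n" for i
    using monoD[OF mono, of i "Suc i"] that by auto
  have finite: "finite (A i)" if "i \<le> Suc n" for i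
    using fin monoD[OF mono that] finite_subset by blast
  have "i + 1 \<le> card (A i)" if "i \<le> Suc n" for i
    using that
  proof (induction i)
    case 0
    then show ?case
      using finite[of 0] \<open>A 0 \<noteq> {}\<close> by (simp add: Suc_le_eq card_gt_0_iff)
  next
    case (Suc i)
    then have "card (A i) < card (A (Suc i))"
      by (intro psubset_card_mono finite grow) simp_all
    with Suc show ?case by simp
  qed
  from this[of "Suc n"] \<open>card (A (Suc n)) \<le> n + 1\<close> show False by simp
qed

subsection \<open>Colouring from a cover of finite multiplicity\<close>

locale layered_cover =
  fixes X :: "'a set" and \<epsilon> :: "('a \<times> 'a) set" and e :: "nat \<Rightarrow> ('a \<times> 'a) set"
    and \<U> :: "'a set set" and n :: nat
  assumes sym_eps: "sym \<epsilon>"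
    and mono_e: "mono e"
    and sym_e: "sym (e i)"
    and refl_e: "Id_on X \<subseteq> e i"
    and e_step: "e i O \<epsilon> \<subseteq> e (Suc i)"
    and covers: "X \<subseteq> \<Union>\<U>"
    and finite_top: "x \<in> X \<Longrightarrow> finite (members_meeting \<U> x (e (Suc n)))"
    and card_top: "x \<in> X \<Longrightarrow> card (members_meeting \<U> x (e (Suc n))) \<le> n + 1"
begin

definition layer :: "nat \<Rightarrow> 'a \<Rightarrow> 'a set set" where
  "layer i x = members_meeting \<U> x (e i)"

definition stable_index :: "'a \<Rightarrow> nat" where
  "stable_index x = (LEAST i. layer i x = layer (Suc i) x)"

definition stable_layer :: "'a \<Rightarrow> 'a set set" where
  "stable_layer x = layer (stable_index x) x"

definition colour :: "'a \<Rightarrow> nat" where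
  "colour x = card (stable_layer x) - 1"

lemma layer_mono: "i \<le> j \<Longrightarrow> layer i x \<subseteq> layer j x"
  using monoD[OF mono_e] unfolding layer_def members_meeting_def ball_def by blast

lemma layer_finite: "x \<in> X \<Longrightarrow> i \<le> Suc n \<Longrightarrow> finite (layer i x)"
  using finite_top layer_mono finite_subset unfolding layer_def by metis

lemma layer_nonempty: "x \<in> X \<Longrightarrow> layer i x \<noteq> {}"
  using covers refl_e unfolding layer_def members_meeting_def ball_def by blast

lemma layer_step: "(x, y) \<in> \<epsilon> \<Longrightarrow> layer i x \<subseteq> layer (Suc i) y"
  using e_step sym_e sym_eps unfolding layer_def members_meeting_def ball_def sym_def by blast

lemma stable_index:
  assumes "x \<in> X"
  shows "stable_index x \<le> n" "layer (stable_index x) x = layer (Suc (stable_index x)) x"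
proof -
  have "mono (\<lambda>i. layer i x)"
    by (rule monoI) (rule layer_mono)
  then obtain i where "i \<le> n" "layer i x = layer (Suc i) x"
    using mono_finite_sets_stabilise[of "\<lambda>i. layer i x", OF _ layer_finite[OF assms order_refl]
        layer_nonempty[OF assms] card_top[OF assms, folded layer_def]]
    by blast
  then show "stable_index x \<le> n" "layer (stable_index x) x = layer (Suc (stable_index x)) x"
    unfolding stable_index_def
    using Least_le[of "\<lambda>i. layer i x = layer (Suc i) x" i] LeastI[of "\<lambda>i. layer i x = layer (Suc i) x" i]
    by simp_all
qed

lemma stable_layer_finite: "x \<in> X \<Longrightarrow> finite (stable_layer x)"
  unfolding stable_layer_def by (rule layer_finite) (simp_all add: stable_index(1) le_SucI)

lemma stable_layer_subset_top: "x \<in> X \<Longrightarrow> stable_layer x \<subseteq> layer (Suc n) x"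
  unfolding stable_layer_def by (rule layer_mono) (simp add: stable_index(1) le_SucI)

lemma colour_le: "x \<in> X \<Longrightarrow> colour x \<le> n"
  using card_mono[OF layer_finite stable_layer_subset_top] card_top
  unfolding colour_def layer_def by fastforce

lemma stable_layer_subset:
  assumes "y \<in> X" "(x, y) \<in> \<epsilon>" "stable_index x \<le> stable_index y"
  shows "stable_layer x \<subseteq> stable_layer y"
proof -
  have "stable_layer x \<subseteq> layer (Suc (stable_index x)) y"
    unfolding stable_layer_def using layer_step[OF assms(2)] .
  also have "\<dots> \<subseteq> stable_layer y"
  proof (cases "stable_index x = stable_index y")
    case True
    then show ?thesis using stable_index(2)[OF \<open>y \<in> X\<close>] by (simp add: stable_layer_def)
  next
    case False
    then show ?thesis using assms(3) layer_mono by (simp add: stable_layer_def)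
  qed
  finally show ?thesis .
qed

lemma stable_layer_eq:
  assumes "x \<in> X" "y \<in> X" "(x, y) \<in> \<epsilon>" "colour x = colour y"
  shows "stable_layer x = stable_layer y"
proof -
  have "card (stable_layer x) > 0" "card (stable_layer y) > 0"
    using stable_layer_finite layer_nonempty assms(1,2)
    unfolding stable_layer_def by (simp_all add: card_gt_0_iff)
  with assms(4) have card: "card (stable_layer x) = card (stable_layer y)"
    unfolding colour_def by arith
  have "(y, x) \<in> \<epsilon>"
    using assms(3) sym_eps by (rule symD[rotated])
  then show ?thesis
    using stable_layer_subset assms card card_subset_eq stable_layer_finite
    by (metis nat_le_linear)
qed

lemma stable_layer_constant_on_chain:
  assumes "C \<subseteq> X" "eps_chain \<epsilon> C" "monochrome colour C" "a \<in> C" "b \<in> C"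
  shows "stable_layer a = stable_layer b"
proof -
  obtain m f where C: "C = f ` {0..m}" and edges: "\<forall>i<m. (f i, f (Suc i)) \<in> \<epsilon>"
    using assms(2) unfolding eps_chain_def by blast
  have "stable_layer (f k) = stable_layer (f 0)" if "k \<le> m" for k
    using that
  proof (induction k)
    case (Suc k)
    have "f k \<in> C" "f (Suc k) \<in> C"
      using C Suc.prems by auto
    then have "stable_layer (f k) = stable_layer (f (Suc k))"
      using assms(1,3) edges Suc.prems unfolding monochrome_def
      by (intro stable_layer_eq) (blast, blast, simp, blast)
    with Suc.IH Suc.prems show ?case by (metis Suc_leD)
  qed simp
  moreover obtain i j where "i \<le> m" "a = f i" "j \<le> m" "b = f j"
    using C assms(4,5) by auto
  ultimately show ?thesis
    by metis
qed

lemma monochrome_chain_square: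
  assumes "C \<subseteq> X" "eps_chain \<epsilon> C" "monochrome colour C"
  shows "C \<times> C \<subseteq> e (Suc n) O mesh \<U> O e (Suc n)"
proof safe
  fix a b assume "a \<in> C" "b \<in> C"
  then obtain U where U: "U \<in> stable_layer a" "U \<in> stable_layer b"
    using layer_nonempty stable_layer_constant_on_chain assms
    unfolding stable_layer_def by blast
  have near: "\<exists>z\<in>U. (x, z) \<in> e (Suc n)" if "x \<in> C" "U \<in> stable_layer x" for x
    using stable_layer_subset_top that assms(1)
    unfolding layer_def members_meeting_def ball_def by blast
  obtain z w where "z \<in> U" "(a, z) \<in> e (Suc n)" "w \<in> U" "(b, w) \<in> e (Suc n)"
    using near \<open>a \<in> C\<close> \<open>b \<in> C\<close> U by blast
  moreover have "U \<in> \<U>"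
    using U unfolding stable_layer_def layer_def members_meeting_def by blast
  ultimately show "(a, b) \<in> e (Suc n) O mesh \<U> O e (Suc n)"
    using sym_e unfolding mesh_def sym_def by blast
qed

end

lemma asdim_prop_imp_chain_bounded_colouring:
  assumes X: "coarse_space X E" and "asdim_prop X E n" and "\<epsilon> \<in> E"
  shows "\<exists>\<delta>\<in>E. \<exists>\<chi>. chain_bounded_colouring n \<epsilon> \<delta> X \<chi>"
proof -
  obtain e where e: "(\<forall>i. e i \<in> E) \<and> mono e \<and> (\<forall>i. e i O \<epsilon> \<subseteq> e (Suc i))"
    using coarse_space_iterated_entourages[OF X \<open>\<epsilon> \<in> E\<close>] ..
  then have E: "e i \<in> E" and "mono e" and step: "e i O \<epsilon> \<subseteq> e (Suc i)" for i
    by simp_all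
  have "\<exists>\<U>. \<Union>\<U> = X \<and> (\<exists>\<delta>\<in>E. mesh \<U> \<subseteq> \<delta>) \<and>
     (\<forall>x\<in>X. finite (members_meeting \<U> x (e (Suc n))) \<and>
             card (members_meeting \<U> x (e (Suc n))) \<le> n + 1)"
    using \<open>asdim_prop X E n\<close> E unfolding asdim_prop_def members_meeting_def by (rule bspec)
  then obtain \<U> \<delta> where "\<Union>\<U> = X" "\<delta> \<in> E" "mesh \<U> \<subseteq> \<delta>"
    and mult: "\<forall>x\<in>X. finite (members_meeting \<U> x (e (Suc n))) \<and>
                      card (members_meeting \<U> x (e (Suc n))) \<le> n + 1"
    by blast
  interpret layered_cover X \<epsilon> e \<U> n
  proof unfold_locales
    show "sym \<epsilon>" "sym (e i)" "Id_on X \<subseteq> e i" for i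
      using coarse_space_entourageD[OF X] \<open>\<epsilon> \<in> E\<close> E by blast+
  qed (use \<open>mono e\<close> step \<open>\<Union>\<U> = X\<close> mult in auto)
  obtain \<eta>\<^sub>1 where "\<eta>\<^sub>1 \<in> E" "\<delta> O e (Suc n) \<subseteq> \<eta>\<^sub>1"
    using coarse_space_relcomp[OF X \<open>\<delta> \<in> E\<close> E] .
  obtain \<eta> where "\<eta> \<in> E" "e (Suc n) O \<eta>\<^sub>1 \<subseteq> \<eta>"
    using coarse_space_relcomp[OF X E \<open>\<eta>\<^sub>1 \<in> E\<close>] .
  have "e (Suc n) O mesh \<U> O e (Suc n) \<subseteq> \<eta>"
    using \<open>mesh \<U> \<subseteq> \<delta>\<close> \<open>\<delta> O e (Suc n) \<subseteq> \<eta>\<^sub>1\<close> \<open>e (Suc n) O \<eta>\<^sub>1 \<subseteq> \<eta>\<close> by blast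
  then have "chain_bounded_colouring n \<epsilon> \<eta> X colour"
    using colour_le monochrome_chain_square unfolding chain_bounded_colouring_def by blast
  with \<open>\<eta> \<in> E\<close> show ?thesis by blast
qed

subsection \<open>Gluing colourings of finite sets\<close>

lemma consistent_partial_colouring_Union_chain:
  assumes "Ch \<noteq> {}" and chain: "subset.chain {p. consistent_partial_colouring X n P p} Ch"
  shows "consistent_partial_colouring X n P (\<Union>Ch)"
proof -
  have Ch: "p \<subseteq> X \<times> {..n}" "F \<subseteq> X \<Longrightarrow> finite F \<Longrightarrow> \<exists>\<chi>. P F \<chi> \<and> extends_on F \<chi> p"
    if "p \<in> Ch" for p F
    using chain that unfolding subset.chain_def consistent_partial_colouring_def by blast+
  then have sub: "\<Union>Ch \<subseteq> X \<times> {..n}"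
    by blast
  have "\<exists>\<chi>. P F \<chi> \<and> extends_on F \<chi> (\<Union>Ch)" if F: "F \<subseteq> X" "finite F" for F
  proof -
    have "finite (\<Union>Ch \<inter> F \<times> {..n})"
      using F by blast
    then obtain p where "p \<in> Ch" and p: "\<Union>Ch \<inter> F \<times> {..n} \<subseteq> p"
      using finite_subset_Union_chain[OF _ _ \<open>Ch \<noteq> {}\<close> chain] by blast
    then obtain \<chi> where "P F \<chi>" "extends_on F \<chi> p"
      using Ch(2) F by blast
    moreover have "extends_on F \<chi> (\<Union>Ch)"
      using \<open>extends_on F \<chi> p\<close> p sub unfolding extends_on_def by blast
    ultimately show ?thesis
      by blast
  qed
  with sub show ?thesis
    unfolding consistent_partial_colouring_def by blast
qed

text \<open>If no colour fits at \<open>x\<close>, pick for each colour \<open>c \<le> n\<close> a finite witness \<open>G c\<close> of the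
  inconsistency; a colouring of the finite set \<open>{x} \<union> \<Union>\<^sub>c G c\<close> gives \<open>x\<close> some colour \<open>c\<close> and
  contradicts the witness \<open>G c\<close>.\<close>
lemma maximal_consistent_partial_colouring_total:
  assumes bounded: "\<And>F \<chi> x. P F \<chi> \<Longrightarrow> x \<in> F \<Longrightarrow> \<chi> x \<le> n"
    and subset: "\<And>F G \<chi>. P F \<chi> \<Longrightarrow> G \<subseteq> F \<Longrightarrow> P G \<chi>"
    and p: "consistent_partial_colouring X n P p"
    and maximal: "\<forall>q. consistent_partial_colouring X n P q \<longrightarrow> p \<subseteq> q \<longrightarrow> q = p"
    and "x \<in> X"
  shows "\<exists>c. (x, c) \<in> p"
proof (rule ccontr)
  assume uncoloured: "\<nexists>c. (x, c) \<in> p"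
  have "\<forall>c\<in>{..n}. \<exists>G. G \<subseteq> X \<and> finite G \<and> (\<forall>\<chi>. P G \<chi> \<longrightarrow> \<not> extends_on G \<chi> (insert (x, c) p))"
  proof
    fix c assume "c \<in> {..n}"
    have "\<not> consistent_partial_colouring X n P (insert (x, c) p)"
      using maximal uncoloured by blast
    moreover have "insert (x, c) p \<subseteq> X \<times> {..n}"
      using p \<open>x \<in> X\<close> \<open>c \<in> {..n}\<close> unfolding consistent_partial_colouring_def by blast
    ultimately show "\<exists>G. G \<subseteq> X \<and> finite G \<and> (\<forall>\<chi>. P G \<chi> \<longrightarrow> \<not> extends_on G \<chi> (insert (x, c) p))"
      unfolding consistent_partial_colouring_def by blast
  qed
  then obtain G where G: "\<forall>c\<in>{..n}. G c \<subseteq> X \<and> finite (G c) \<and>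
      (\<forall>\<chi>. P (G c) \<chi> \<longrightarrow> \<not> extends_on (G c) \<chi> (insert (x, c) p))"
    by (rule bchoice[elim_format]) blast
  let ?F = "insert x (\<Union>c\<le>n. G c)"
  have "?F \<subseteq> X" "finite ?F"
    using G \<open>x \<in> X\<close> by auto
  then obtain \<chi> where "P ?F \<chi>" "extends_on ?F \<chi> p"
    using p unfolding consistent_partial_colouring_def by blast
  have "\<chi> x \<in> {..n}"
    using bounded[OF \<open>P ?F \<chi>\<close>] by simp
  then have "G (\<chi> x) \<subseteq> ?F"
    by blast
  then have "P (G (\<chi> x)) \<chi>" "extends_on (G (\<chi> x)) \<chi> (insert (x, \<chi> x) p)"
    using subset[OF \<open>P ?F \<chi>\<close>] \<open>extends_on ?F \<chi> p\<close> unfolding extends_on_def by auto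
  with G \<open>\<chi> x \<in> {..n}\<close> show False
    by blast
qed

lemma finite_colouring_compactness:
  fixes P :: "'a set \<Rightarrow> ('a \<Rightarrow> nat) \<Rightarrow> bool"
  assumes colourable: "\<And>F. F \<subseteq> X \<Longrightarrow> finite F \<Longrightarrow> \<exists>\<chi>. P F \<chi>"
    and bounded: "\<And>F \<chi> x. P F \<chi> \<Longrightarrow> x \<in> F \<Longrightarrow> \<chi> x \<le> n"
    and subset: "\<And>F G \<chi>. P F \<chi> \<Longrightarrow> G \<subseteq> F \<Longrightarrow> P G \<chi>"
    and local: "\<And>F \<chi> \<chi>'. P F \<chi> \<Longrightarrow> (\<And>x. x \<in> F \<Longrightarrow> \<chi>' x = \<chi> x) \<Longrightarrow> P F \<chi>'"
  shows "\<exists>\<chi>. \<forall>F. F \<subseteq> X \<and> finite F \<longrightarrow> P F \<chi>"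
proof -
  let ?A = "{p. consistent_partial_colouring X n P p}"
  have "{} \<in> ?A"
    using colourable unfolding consistent_partial_colouring_def extends_on_def by simp
  have "\<exists>p\<in>?A. \<forall>q\<in>?A. p \<subseteq> q \<longrightarrow> q = p"
  proof (rule subset_Zorn_nonempty)
    show "?A \<noteq> {}"
      using \<open>{} \<in> ?A\<close> by blast
    show "\<Union>Ch \<in> ?A" if "Ch \<noteq> {}" "subset.chain ?A Ch" for Ch
      using consistent_partial_colouring_Union_chain[OF that] by simp
  qed
  then obtain p where p: "consistent_partial_colouring X n P p"
    and maximal: "\<forall>q. consistent_partial_colouring X n P q \<longrightarrow> p \<subseteq> q \<longrightarrow> q = p"
    by auto
  define \<chi> where "\<chi> x = (SOME c. (x, c) \<in> p)" for x
  have \<chi>: "(x, \<chi> x) \<in> p" if "x \<in> X" for x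
  proof -
    have "\<exists>c. (x, c) \<in> p"
      using bounded subset p maximal \<open>x \<in> X\<close> by (rule maximal_consistent_partial_colouring_total)
    then obtain c where "(x, c) \<in> p" ..
    then show ?thesis
      unfolding \<chi>_def by (rule someI)
  qed
  have "P F \<chi>" if F: "F \<subseteq> X" "finite F" for F
  proof -
    have "\<exists>\<chi>'. P F \<chi>' \<and> extends_on F \<chi>' p"
      using p F unfolding consistent_partial_colouring_def by simp
    then obtain \<chi>' where "P F \<chi>'" "extends_on F \<chi>' p"
      by (elim exE conjE)
    have "\<chi> x = \<chi>' x" if "x \<in> F" for x
    proof -
      have "(x, \<chi> x) \<in> p"
        using \<chi> \<open>F \<subseteq> X\<close> that by blast
      with \<open>extends_on F \<chi>' p\<close> that show ?thesis
        unfolding extends_on_def by metis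
    qed
    with \<open>P F \<chi>'\<close> show ?thesis
      by (rule local)
  qed
  then show ?thesis
    by blast
qed

lemma chain_bounded_colouring_subset:
  "chain_bounded_colouring n \<epsilon> \<delta> F \<chi> \<Longrightarrow> G \<subseteq> F \<Longrightarrow> chain_bounded_colouring n \<epsilon> \<delta> G \<chi>"
  unfolding chain_bounded_colouring_def by blast

lemma chain_bounded_colouring_cong:
  assumes "chain_bounded_colouring n \<epsilon> \<delta> F \<chi>" and agree: "\<And>x. x \<in> F \<Longrightarrow> \<chi>' x = \<chi> x"
  shows "chain_bounded_colouring n \<epsilon> \<delta> F \<chi>'"
proof -
  have "monochrome \<chi>' C \<longleftrightarrow> monochrome \<chi> C" if "C \<subseteq> F" for C
    using that agree unfolding monochrome_def by (metis subsetD)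
  then show ?thesis
    using assms unfolding chain_bounded_colouring_def by auto
qed

lemma chain_bounded_colouring_compactness:
  "(\<exists>\<chi>. chain_bounded_colouring n \<epsilon> \<delta> X \<chi>) \<longleftrightarrow>
     (\<forall>F. F \<subseteq> X \<and> finite F \<longrightarrow> (\<exists>\<chi>. chain_bounded_colouring n \<epsilon> \<delta> F \<chi>))"
proof
  assume "\<forall>F. F \<subseteq> X \<and> finite F \<longrightarrow> (\<exists>\<chi>. chain_bounded_colouring n \<epsilon> \<delta> F \<chi>)"
  then have "\<exists>\<chi>. \<forall>F. F \<subseteq> X \<and> finite F \<longrightarrow> chain_bounded_colouring n \<epsilon> \<delta> F \<chi>"
  proof (intro finite_colouring_compactness)
    show "\<chi> x \<le> n" if "chain_bounded_colouring n \<epsilon> \<delta> F \<chi>" "x \<in> F" for F \<chi> x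
      using that unfolding chain_bounded_colouring_def by blast
  qed (auto intro: chain_bounded_colouring_subset chain_bounded_colouring_cong)
  then obtain \<chi> where \<chi>: "\<forall>F. F \<subseteq> X \<and> finite F \<longrightarrow> chain_bounded_colouring n \<epsilon> \<delta> F \<chi>" ..
  have "chain_bounded_colouring n \<epsilon> \<delta> X \<chi>"
    unfolding chain_bounded_colouring_def
  proof (intro conjI ballI allI impI)
    show "\<chi> x \<le> n" if "x \<in> X" for x
    proof -
      have "chain_bounded_colouring n \<epsilon> \<delta> {x} \<chi>"
        using \<chi> that by simp
      then show ?thesis
        unfolding chain_bounded_colouring_def by simp
    qed
    fix C assume C: "C \<subseteq> X \<and> eps_chain \<epsilon> C \<and> monochrome \<chi> C"
    then have "chain_bounded_colouring n \<epsilon> \<delta> C \<chi>"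
      using \<chi> finite_eps_chain by blast
    with C show "C \<times> C \<subseteq> \<delta>"
      unfolding chain_bounded_colouring_def by blast
  qed
  then show "\<exists>\<chi>. chain_bounded_colouring n \<epsilon> \<delta> X \<chi>" by blast
qed (use chain_bounded_colouring_subset in blast)

subsection \<open>Cover from a colouring\<close>

lemma monochrome_edges_rtrancl_chain:
  assumes "(a, b) \<in> (monochrome_edges \<epsilon> \<chi>)\<^sup>*" "\<epsilon> \<subseteq> X \<times> X" "a \<in> X"
  obtains C where "C \<subseteq> X" "eps_chain \<epsilon> C" "monochrome \<chi> C" "a \<in> C" "b \<in> C"
proof -
  obtain k f where f: "f 0 = a" "f k = b"
    and edges: "\<forall>i<k. (f i, f (Suc i)) \<in> monochrome_edges \<epsilon> \<chi>"
    using assms(1) rtrancl_power relpow_fun_conv by metis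
  show thesis
  proof (rule that)
    show "f ` {0..k} \<subseteq> X"
    proof clarify
      fix i assume "i \<in> {0..k}"
      then show "f i \<in> X"
        using edges f(1) assms(2,3) unfolding monochrome_edges_def
        by (cases i) (auto simp: Suc_le_eq)
    qed
    have "\<chi> (f i) = \<chi> a" if "i \<le> k" for i
      using that by (induction i) (use edges f(1) in \<open>auto simp: monochrome_edges_def\<close>)
    then show "monochrome \<chi> (f ` {0..k})"
      unfolding monochrome_def by auto
    show "eps_chain \<epsilon> (f ` {0..k})"
      unfolding eps_chain_def using edges
      by (intro exI[of _ k] exI[of _ f]) (auto simp: monochrome_edges_def)
    show "a \<in> f ` {0..k}" "b \<in> f ` {0..k}"
      using f by force+
  qed
qed

lemma chain_bounded_colouring_imp_cover:
  assumes "sym \<epsilon>" "sym \<epsilon>'" "\<epsilon> O \<epsilon> \<subseteq> \<epsilon>'" "\<epsilon>' \<subseteq> X \<times> X"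
    and \<chi>: "chain_bounded_colouring n \<epsilon>' \<delta> X \<chi>"
  shows "\<exists>\<U>. \<Union>\<U> = X \<and> mesh \<U> \<subseteq> \<delta> \<and>
           (\<forall>x\<in>X. finite (members_meeting \<U> x \<epsilon>) \<and> card (members_meeting \<U> x \<epsilon>) \<le> n + 1)"
proof -
  define S where "S = (monochrome_edges \<epsilon>' \<chi>)\<^sup>*"
  define \<U> where "\<U> = (\<lambda>a. S `` {a}) ` X"
  have component: "b \<in> X \<and> \<chi> a = \<chi> b \<and> (a, b) \<in> \<delta>" if ab: "(a, b) \<in> S" and "a \<in> X" for a b
  proof -
    obtain C where C: "C \<subseteq> X" "eps_chain \<epsilon>' C" "monochrome \<chi> C" "a \<in> C" "b \<in> C"
      using monochrome_edges_rtrancl_chain[OF ab[unfolded S_def] assms(4) \<open>a \<in> X\<close>] .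
    then have "C \<times> C \<subseteq> \<delta>"
      using \<chi> unfolding chain_bounded_colouring_def by blast
    with C show ?thesis
      unfolding monochrome_def by blast
  qed
  have "sym S"
    unfolding S_def by (rule sym_rtrancl) (use \<open>sym \<epsilon>'\<close> in \<open>auto simp: monochrome_edges_def sym_def\<close>)
  have class_eq: "U = S `` {y}" if U: "U \<in> \<U>" and y: "y \<in> U" for U y
  proof -
    obtain a where "U = S `` {a}" "(a, y) \<in> S"
      using U y unfolding \<U>_def by blast
    moreover have "(y, a) \<in> S"
      using \<open>sym S\<close> \<open>(a, y) \<in> S\<close> by (rule symD)
    ultimately show ?thesis
      unfolding S_def by (blast intro: rtrancl_trans)
  qed
  have monochrome_class: "U \<subseteq> X \<and> (\<forall>z\<in>U. \<chi> z = \<chi> y)" if U: "U \<in> \<U>" and y: "y \<in> U" for U y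
  proof -
    obtain a where "a \<in> X" "U = S `` {a}"
      using U unfolding \<U>_def by blast
    then have "b \<in> X \<and> \<chi> b = \<chi> a" if "b \<in> U" for b
      using component that by force
    then show ?thesis
      using y by auto
  qed
  have "\<Union>\<U> = X"
  proof
    show "\<Union>\<U> \<subseteq> X"
      using monochrome_class by blast
    show "X \<subseteq> \<Union>\<U>"
    proof
      fix x assume "x \<in> X"
      moreover have "x \<in> S `` {x}"
        unfolding S_def by simp
      ultimately show "x \<in> \<Union>\<U>"
        unfolding \<U>_def by blast
    qed
  qed
  moreover have "mesh \<U> \<subseteq> \<delta>"
  proof
    fix p assume "p \<in> mesh \<U>"
    then obtain U y z where "p = (y, z)" "U \<in> \<U>" "y \<in> U" "z \<in> U"
      unfolding mesh_def by blast
    moreover have "(y, z) \<in> S"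
      using class_eq[OF \<open>U \<in> \<U>\<close> \<open>y \<in> U\<close>] \<open>z \<in> U\<close> by blast
    moreover have "y \<in> X"
      using monochrome_class[OF \<open>U \<in> \<U>\<close> \<open>y \<in> U\<close>] \<open>y \<in> U\<close> by blast
    ultimately show "p \<in> \<delta>"
      using component by blast
  qed
  moreover have "finite (members_meeting \<U> x \<epsilon>) \<and> card (members_meeting \<U> x \<epsilon>) \<le> n + 1"
    if "x \<in> X" for x
  proof -
    define g where "g U = \<chi> (SOME y. y \<in> U)" for U
    have g: "g U = \<chi> y" if "U \<in> \<U>" "y \<in> U" for U y
      using monochrome_class[OF that] someI[of "\<lambda>y. y \<in> U", OF that(2)] unfolding g_def by simp
    have "inj_on g (members_meeting \<U> x \<epsilon>)"
    proof (rule inj_onI)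
      fix U V assume "U \<in> members_meeting \<U> x \<epsilon>" "V \<in> members_meeting \<U> x \<epsilon>" "g U = g V"
      then obtain y z where "U \<in> \<U>" "V \<in> \<U>" "y \<in> U" "z \<in> V" "(x, y) \<in> \<epsilon>" "(x, z) \<in> \<epsilon>"
        unfolding members_meeting_def ball_def by blast
      moreover have "\<chi> y = \<chi> z"
        using g \<open>g U = g V\<close> calculation by metis
      moreover have "(y, z) \<in> \<epsilon>'"
        using \<open>(x, y) \<in> \<epsilon>\<close> \<open>(x, z) \<in> \<epsilon>\<close> \<open>sym \<epsilon>\<close> assms(3) by (blast dest: symD)
      ultimately have "(y, z) \<in> S" "U = S `` {y}" "V = S `` {z}"
        using class_eq unfolding S_def monochrome_edges_def by auto
      then have "z \<in> U"
        by simp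
      with \<open>V = S `` {z}\<close> show "U = V"
        using class_eq[OF \<open>U \<in> \<U>\<close>] by simp
    qed
    moreover have "g U \<in> {..n}" if U: "U \<in> members_meeting \<U> x \<epsilon>" for U
    proof -
      obtain y where "U \<in> \<U>" "y \<in> U"
        using U unfolding members_meeting_def by blast
      then have "g U = \<chi> y" "y \<in> X"
        using g monochrome_class by blast+
      then show ?thesis
        using \<chi> unfolding chain_bounded_colouring_def by simp
    qed
    then have "g ` members_meeting \<U> x \<epsilon> \<subseteq> {..n}"
      by blast
    ultimately show ?thesis
      using inj_on_finite[of g _ "{..n}"] card_inj_on_le[of g _ "{..n}"] by simp
  qed
  ultimately show ?thesis by blast
qed

lemma chain_bounded_colourings_imp_asdim_prop:
  assumes X: "coarse_space X E"
    and colourings: "\<forall>\<epsilon>\<in>E. \<exists>\<delta>\<in>E. \<exists>\<chi>. chain_bounded_colouring n \<epsilon> \<delta> X \<chi>"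
  shows "asdim_prop X E n"
  unfolding asdim_prop_def members_meeting_def[symmetric]
proof
  fix \<epsilon> assume "\<epsilon> \<in> E"
  obtain \<epsilon>' where "\<epsilon>' \<in> E" "\<epsilon> O \<epsilon> \<subseteq> \<epsilon>'"
    using coarse_space_relcomp[OF X \<open>\<epsilon> \<in> E\<close> \<open>\<epsilon> \<in> E\<close>] .
  moreover obtain \<delta> \<chi> where "\<delta> \<in> E" "chain_bounded_colouring n \<epsilon>' \<delta> X \<chi>"
    using colourings \<open>\<epsilon>' \<in> E\<close> by blast
  ultimately have "\<exists>\<U>. \<Union>\<U> = X \<and> mesh \<U> \<subseteq> \<delta> \<and>
      (\<forall>x\<in>X. finite (members_meeting \<U> x \<epsilon>) \<and> card (members_meeting \<U> x \<epsilon>) \<le> n + 1)"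
    using coarse_space_entourageD(2,3)[OF X] \<open>\<epsilon> \<in> E\<close>
    by (intro chain_bounded_colouring_imp_cover) auto
  then obtain \<U> where "\<Union>\<U> = X" "mesh \<U> \<subseteq> \<delta>"
    "\<forall>x\<in>X. finite (members_meeting \<U> x \<epsilon>) \<and> card (members_meeting \<U> x \<epsilon>) \<le> n + 1"
    by (elim exE conjE)
  with \<open>\<delta> \<in> E\<close> show "\<exists>\<U>. \<Union>\<U> = X \<and> (\<exists>\<delta>\<in>E. mesh \<U> \<subseteq> \<delta>) \<and>
      (\<forall>x\<in>X. finite (members_meeting \<U> x \<epsilon>) \<and> card (members_meeting \<U> x \<epsilon>) \<le> n + 1)"
    by (intro exI[of _ \<U>] conjI bexI[of _ \<delta>])
qed

theorem proposition2p5: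
  fixes X :: "'a set" and E :: "('a \<times> 'a) set set" and n :: nat
  assumes "coarse_space X E"
  shows "asdim X E \<le> enat n \<longleftrightarrow>
    (\<forall>\<epsilon>\<in>E. \<exists>\<delta>\<in>E. \<forall>F. F \<subseteq> X \<and> finite F \<longrightarrow>
       (\<exists>\<chi>::'a \<Rightarrow> nat. (\<forall>x\<in>F. \<chi> x \<le> n) \<and>
          (\<forall>C. C \<subseteq> F \<and> eps_chain \<epsilon> C \<and> monochrome \<chi> C \<longrightarrow> C \<times> C \<subseteq> \<delta>)))"
proof -
  have "asdim X E \<le> enat n \<longleftrightarrow> asdim_prop X E n"
    by (rule asdim_le_enat_iff)
  also have "\<dots> \<longleftrightarrow> (\<forall>\<epsilon>\<in>E. \<exists>\<delta>\<in>E. \<exists>\<chi>. chain_bounded_colouring n \<epsilon> \<delta> X \<chi>)"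
    using asdim_prop_imp_chain_bounded_colouring[OF assms]
      chain_bounded_colourings_imp_asdim_prop[OF assms] by blast
  also have "\<dots> \<longleftrightarrow> (\<forall>\<epsilon>\<in>E. \<exists>\<delta>\<in>E. \<forall>F. F \<subseteq> X \<and> finite F \<longrightarrow>
                        (\<exists>\<chi>. chain_bounded_colouring n \<epsilon> \<delta> F \<chi>))"
    by (intro ball_cong bex_cong refl chain_bounded_colouring_compactness)
  finally show ?thesis
    unfolding chain_bounded_colouring_def .
qed

end
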